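(* For every integer $i\ge2$ and every graph $G$, $\hom(S_{2,1^{i-2}};G)\cdot\hom(S_{2,1^{i}};G)\ge \hom(S_{2,1^{i-1}};G)^2$.
   Context: All graphs are finite; $\hom(H;G)$ is the number of graph homomorphisms from $H$ to $G$. For $k\ge0$, $S_{2,1^k}$ is the tree with vertex set $\{1,\ldots,k+3\}$ and edge set $\{\{1,j\}:2\le j\le k+2\}\cup\{\{k+2,k+3\}\}$. *)

theory Defs
  imports Main "HOL-Library.FuncSet"
begin

definition simple_graph :: "'a set \<Rightarrow> ('a \<Rightarrow> 'a \<Rightarrow> bool) \<Rightarrow> bool" where
  "simple_graph V E \<longleftrightarrow> finite V \<and> (\<forall>u v. E u v \<longrightarrow> u \<in> V \<and> v \<in> V)
     \<and> (\<forall>u v. E u v \<longrightarrow> E v u) \<and> (\<forall>u. \<not> E u u)"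

definition hom_count :: "'b set \<Rightarrow> 'b set set \<Rightarrow> 'a set \<Rightarrow> ('a \<Rightarrow> 'a \<Rightarrow> bool) \<Rightarrow> nat" where
  "hom_count VH EH V E =
     card {f \<in> VH \<rightarrow>\<^sub>E V. \<forall>u v. {u, v} \<in> EH \<longrightarrow> E (f u) (f v)}"

definition S_verts :: "nat \<Rightarrow> nat set" where
  "S_verts k = {1..k+3}"

definition S_edges :: "nat \<Rightarrow> nat set set" where
  "S_edges k = {{1, j} | j. 2 \<le> j \<and> j \<le> k + 2} \<union> {{k + 2, k + 3}}"

definition hom_S :: "nat \<Rightarrow> 'a set \<Rightarrow> ('a \<Rightarrow> 'a \<Rightarrow> bool) \<Rightarrow> nat" where
  "hom_S k V E = hom_count (S_verts k) (S_edges k) V E"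

end

theory Submission
  imports Defs "HOL-Analysis.Convex"
begin

(* A homomorphism of S_{2,1^k} into G is determined by the image v of the centre 1, the
   image u of the vertex k+2 of degree two, a neighbour of u for the leaf k+3, and k further
   neighbours of v.  Hence hom(S_{2,1^k}; G) = sum_v w(v) d(v)^k with w(v) = sum_{u ~ v} d(u)
   independent of k, and the Cauchy-Schwarz inequality for the weights w(v) d(v)^k shows that
   k |-> sum_v w(v) d(v)^k is log-convex. *)

lemma power_sum_log_convex:
  fixes c x :: "'v \<Rightarrow> real"
  assumes "\<And>v. v \<in> A \<Longrightarrow> 0 \<le> c v" and "\<And>v. v \<in> A \<Longrightarrow> 0 \<le> x v"
  shows "(\<Sum>v\<in>A. c v * x v ^ (k + 1))\<^sup>2
           \<le> (\<Sum>v\<in>A. c v * x v ^ k) * (\<Sum>v\<in>A. c v * x v ^ (k + 2))"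
proof -
  define r where "r v = sqrt (c v * x v ^ k)" for v
  have r_sq: "(r v)\<^sup>2 = c v * x v ^ k" if "v \<in> A" for v
    unfolding r_def using assms that by simp
  have "(\<Sum>v\<in>A. r v * (r v * x v))\<^sup>2 \<le> (\<Sum>v\<in>A. (r v)\<^sup>2) * (\<Sum>v\<in>A. (r v * x v)\<^sup>2)"
    by (rule Cauchy_Schwarz_ineq_sum)
  moreover have "r v * (r v * x v) = c v * x v ^ (k + 1)" if "v \<in> A" for v
    using r_sq[OF that] by (simp add: power2_eq_square)
  moreover have "(r v * x v)\<^sup>2 = c v * x v ^ (k + 2)" if "v \<in> A" for v
    using r_sq[OF that] by (simp add: power_mult_distrib power_add power2_eq_square)
  ultimately show ?thesis
    by (simp add: r_sq cong: sum.cong)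
qed

definition neighbours :: "'a set \<Rightarrow> ('a \<Rightarrow> 'a \<Rightarrow> bool) \<Rightarrow> 'a \<Rightarrow> 'a set" where
  "neighbours V E v = {u \<in> V. E v u}"

definition degree :: "'a set \<Rightarrow> ('a \<Rightarrow> 'a \<Rightarrow> bool) \<Rightarrow> 'a \<Rightarrow> nat" where
  "degree V E v = card (neighbours V E v)"

lemma hom_S_eq_card_star_maps:
  assumes "symp E"
  shows "hom_S k V E = card {f \<in> {1..k+3} \<rightarrow>\<^sub>E V.
           (\<forall>j\<in>{2..k+2}. E (f 1) (f j)) \<and> E (f (k+2)) (f (k+3))}"
proof -
  have "(\<forall>u v. {u, v} \<in> S_edges k \<longrightarrow> E (f u) (f v)) \<longleftrightarrow>
          (\<forall>j\<in>{2..k+2}. E (f 1) (f j)) \<and> E (f (k+2)) (f (k+3))" for f :: "nat \<Rightarrow> 'a"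
    using assms unfolding S_edges_def by (auto simp: doubleton_eq_iff dest: sympD)
  then show ?thesis
    unfolding hom_S_def hom_count_def S_verts_def by simp
qed

lemma bij_betw_star_maps:
  fixes k :: nat
  shows "bij_betw (\<lambda>f. (f 1, f (k+2), f (k+3), restrict f {2..k+1}))
     {f \<in> {1..k+3} \<rightarrow>\<^sub>E V. (\<forall>j\<in>{2..k+2}. E (f 1) (f j)) \<and> E (f (k+2)) (f (k+3))}
     (SIGMA v:V. SIGMA u:neighbours V E v. neighbours V E u \<times> ({2..k+1} \<rightarrow>\<^sub>E neighbours V E v))"
  (is "bij_betw ?\<phi> ?H ?T")
proof (rule bij_betw_byWitness)
  let ?\<psi> = "\<lambda>(v, u, x, g) j. if j \<in> {1..k+3} then
      (if j = 1 then v else if j = k+2 then u else if j = k+3 then x else g j) else undefined"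
  show "\<forall>f\<in>?H. ?\<psi> (?\<phi> f) = f"
    by (auto simp: fun_eq_iff PiE_def extensional_def)
  show "\<forall>t\<in>?T. ?\<phi> (?\<psi> t) = t"
    by (auto simp: fun_eq_iff PiE_def extensional_def)
  show "?\<phi> ` ?H \<subseteq> ?T"
    by (auto simp: neighbours_def PiE_def Pi_def)
  show "?\<psi> ` ?T \<subseteq> ?H"
    by (auto simp: neighbours_def PiE_def Pi_def extensional_def)
qed

lemma hom_S_eq_sum:
  assumes "finite V" and "symp E"
  shows "hom_S k V E
           = (\<Sum>v\<in>V. (\<Sum>u\<in>neighbours V E v. degree V E u) * degree V E v ^ k)"
proof -
  have fin_nbs: "finite (neighbours V E v)" for v
    using assms(1) unfolding neighbours_def by simp
  have "hom_S k V E = card (SIGMA v:V. SIGMA u:neighbours V E v.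
          neighbours V E u \<times> ({2..k+1} \<rightarrow>\<^sub>E neighbours V E v))"
    using hom_S_eq_card_star_maps[OF assms(2)] bij_betw_same_card[OF bij_betw_star_maps]
    by simp
  also have "\<dots> = (\<Sum>v\<in>V. \<Sum>u\<in>neighbours V E v. degree V E u * degree V E v ^ k)"
    using assms(1) fin_nbs
    by (simp add: degree_def card_SigmaI card_cartesian_product card_PiE finite_PiE)
  finally show ?thesis
    by (simp add: sum_distrib_right)
qed

theorem theorem3p4:
  fixes V :: "'a set" and E :: "'a \<Rightarrow> 'a \<Rightarrow> bool" and i :: nat
  assumes "simple_graph V E" and "i \<ge> 2"
  shows "hom_S (i - 2) V E * hom_S i V E \<ge> (hom_S (i - 1) V E)^2"
proof -
  obtain k where i: "i = k + 2"
    using assms(2) by (metis add.commute le_Suc_ex)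
  have "finite V" and "symp E"
    using assms(1) unfolding simple_graph_def symp_def by blast+
  define w where "w v = real (\<Sum>u\<in>neighbours V E v. degree V E u)" for v
  define d where "d v = real (degree V E v)" for v
  have hom_S_real: "real (hom_S n V E) = (\<Sum>v\<in>V. w v * d v ^ n)" for n
    unfolding hom_S_eq_sum[OF \<open>finite V\<close> \<open>symp E\<close>] w_def d_def by simp
  have "real ((hom_S (k + 1) V E)\<^sup>2) \<le> real (hom_S k V E * hom_S (k + 2) V E)"
    unfolding of_nat_power of_nat_mult hom_S_real
    by (rule power_sum_log_convex) (simp_all add: w_def d_def sum_nonneg)
  then show ?thesis
    unfolding i of_nat_le_iff by simp
qed

end
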